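(* Let $\mathcal M=(G,In,Out,Leak)$ be a strongly connected linear compartmental model with $n$ compartments, $In=\{j\}$ and $Out=\{i\}$. Write the input-output equation as $$y_i^{(n)}+c_{n-1}y_i^{(n-1)}+\dots+c_1y_i'+c_0y_i=(-1)^{i+j}\left(d_{n-1}u_j^{(n-1)}+\dots+d_1u_j'+d_0u_j\right).$$ The coefficients on the left-hand side that are non-constant (as polynomials in the parameters) are exactly $c_0,c_1,\dots,c_{n-1}$ if $Leak\ne\emptyset$, and $c_1,\dots,c_{n-1}$ if $Leak=\emptyset$. The coefficients on the right-hand side that are non-constant are exactly $d_0,d_1,\dots,d_{n-2}$ if $In=Out$, and $d_0,d_1,\dots,d_{n-L-1}$ if $In\ne Out$, where $L$ is the length of a shortest directed path in $G$ from $j$ to $i$.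
   Context: A linear compartmental model $\mathcal M=(G,In,Out,Leak)$ consists of a finite directed graph $G=(V_G,E_G)$ without multi-edges, compartments $V_G=\{1,\dots,n\}$, and subsets $In,Out,Leak\subseteq V_G$; edge $k\to \ell$ carries parameter $a_{\ell k}$ and each $\ell\in Leak$ carries $a_{0\ell}$, and the parameters are independent indeterminates. The compartmental matrix $A$ has $A_{\ell\ell}=-\sum_{k:\,\ell\to k\in E_G}a_{k\ell}$ (minus $a_{0\ell}$ if $\ell\in Leak$), $A_{\ell k}=a_{\ell k}$ if $k\to\ell\in E_G$, $0$ otherwise. With $B^{p,q}$ denoting removal of row $p$ and column $q$, the input-output equation is $\det(\partial I-A)y_i=(-1)^{i+j}\det((\partial I-A)^{j,i})u_j$, $\partial I$ the diagonal matrix of $d/dt$'s; its coefficients are polynomials in the parameters. *)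

theory Defs
  imports "HOL-Library.Poly_Mapping" "Jordan_Normal_Form.Char_Poly" "Jordan_Normal_Form.Determinant"
begin

text \<open>Multivariate polynomials with real coefficients in indeterminates indexed by
  pairs of naturals: the parameter a_{l k} is the indeterminate indexed (l,k);
  the leak parameter a_{0 l} is the indeterminate indexed (0,l).  Compartments are 1..n.\<close>

type_synonym mpoly = "((nat \<times> nat) \<Rightarrow>\<^sub>0 nat) \<Rightarrow>\<^sub>0 real"

definition mvar :: "nat \<times> nat \<Rightarrow> mpoly" where
  "mvar v = Poly_Mapping.single (Poly_Mapping.single v 1) 1"

definition mconst :: "real \<Rightarrow> mpoly" where
  "mconst c = Poly_Mapping.single 0 c"

definition is_constant_mpoly :: "mpoly \<Rightarrow> bool" where
  "is_constant_mpoly p \<longleftrightarrow> (\<exists>c. p = mconst c)"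

definition comp_entry :: "(nat \<times> nat) set \<Rightarrow> nat set \<Rightarrow> nat \<Rightarrow> nat \<Rightarrow> mpoly" where
  "comp_entry E Leak l k =
     (if l = k then
        - (\<Sum>m\<in>{m. (l, m) \<in> E}. mvar (m, l)) - (if l \<in> Leak then mvar (0, l) else 0)
      else if (k, l) \<in> E then mvar (l, k) else 0)"

definition comp_matrix :: "nat \<Rightarrow> (nat \<times> nat) set \<Rightarrow> nat set \<Rightarrow> mpoly mat" where
  "comp_matrix n E Leak = mat n n (\<lambda>(r, c). comp_entry E Leak (r + 1) (c + 1))"

text \<open>Left-hand side: det(\<partial>I - A) as a polynomial in \<partial>; c_k is its k-th coefficient.\<close>
definition lhs_coeff :: "nat \<Rightarrow> (nat \<times> nat) set \<Rightarrow> nat set \<Rightarrow> nat \<Rightarrow> mpoly" where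
  "lhs_coeff n E Leak k = coeff (det (char_poly_matrix (comp_matrix n E Leak))) k"

text \<open>Right-hand side: det((\<partial>I - A)^{j,i}) (row j and column i removed); d_k is its k-th coefficient.\<close>
definition rhs_coeff :: "nat \<Rightarrow> (nat \<times> nat) set \<Rightarrow> nat set \<Rightarrow> nat \<Rightarrow> nat \<Rightarrow> nat \<Rightarrow> mpoly" where
  "rhs_coeff n E Leak i j k =
     coeff (det (mat_delete (char_poly_matrix (comp_matrix n E Leak)) (j - 1) (i - 1))) k"

definition strongly_connected :: "nat \<Rightarrow> (nat \<times> nat) set \<Rightarrow> bool" where
  "strongly_connected n E \<longleftrightarrow> (\<forall>u\<in>{1..n}. \<forall>v\<in>{1..n}. (u, v) \<in> E\<^sup>*)"

definition dist_path :: "(nat \<times> nat) set \<Rightarrow> nat \<Rightarrow> nat \<Rightarrow> nat" where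
  "dist_path E u v = (LEAST m. (u, v) \<in> E ^^ m)"

end

theory Submission
  imports Defs "HOL-Combinatorics.Cycles"
begin

text \<open>A coefficient is non-constant as soon as some one-parameter specialization of it is a
  non-constant function of \<open>t\<close>. Give weight \<open>t\<close> to the edges of a shortest-path in-tree
  towards a compartment \<open>\<rho>\<close> and to the leak at \<open>\<rho>\<close>, and weight \<open>0\<close> to everything else.
  Ordering compartments by their distance to \<open>\<rho>\<close> makes \<open>\<partial>I - A\<close> triangular, so
  \<open>det (\<partial>I - A)\<close> becomes \<open>(\<partial> + [\<rho> \<in> Leak] t) (\<partial> + t)\<^bsup>n-1\<^esup>\<close>. For \<open>\<rho> = i\<close>, the minor
  only keeps the term of the cyclic permutation along a shortest path from \<open>j\<close> to \<open>i\<close> and becomes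
  \<open>\<plusminus>t\<^bsup>L\<^esup> (\<partial> + t)\<^bsup>n-1-L\<^esup>\<close>. The coefficients claimed to be non-constant are then
  nonzero multiples of positive powers of \<open>t\<close>. The remaining coefficients are constant: without leaks the columns of \<open>A\<close> sum to zero,
  so \<open>c\<^sub>0 = \<plusminus>det A = 0\<close>; for \<open>i = j\<close> the minor is a characteristic polynomial, so
  \<open>d\<^bsub>n-1\<^esub> = 1\<close>; and for \<open>i \<noteq> j\<close> every term of the minor's Leibniz expansion moves the
  \<open>L + 1\<close> compartments of a path from \<open>j\<close> to \<open>i\<close>, which bounds its degree by \<open>n - 1 - L\<close>.\<close>

definition monom_eval :: "('v \<Rightarrow> 'a::comm_semiring_1) \<Rightarrow> ('v \<Rightarrow>\<^sub>0 nat) \<Rightarrow> 'a" where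
  "monom_eval \<alpha> m = (\<Prod>v\<in>Poly_Mapping.keys m. \<alpha> v ^ Poly_Mapping.lookup m v)"

definition mpoly_eval :: "('v \<Rightarrow> 'a::comm_semiring_1) \<Rightarrow> (('v \<Rightarrow>\<^sub>0 nat) \<Rightarrow>\<^sub>0 'a) \<Rightarrow> 'a" where
  "mpoly_eval \<alpha> p = (\<Sum>m\<in>Poly_Mapping.keys p. Poly_Mapping.lookup p m * monom_eval \<alpha> m)"

lemma monom_eval_superset:
  "finite S \<Longrightarrow> Poly_Mapping.keys m \<subseteq> S \<Longrightarrow> monom_eval \<alpha> m = (\<Prod>v\<in>S. \<alpha> v ^ Poly_Mapping.lookup m v)"
  unfolding monom_eval_def by (rule prod.mono_neutral_left) (auto simp: in_keys_iff)

lemma monom_eval_add: "monom_eval \<alpha> (a + b) = monom_eval \<alpha> a * monom_eval \<alpha> b"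
proof -
  let ?S = "Poly_Mapping.keys a \<union> Poly_Mapping.keys b"
  have "monom_eval \<alpha> (a + b) = (\<Prod>v\<in>?S. \<alpha> v ^ Poly_Mapping.lookup (a + b) v)"
    by (rule monom_eval_superset) (simp_all add: keys_add)
  also have "\<dots> = (\<Prod>v\<in>?S. \<alpha> v ^ Poly_Mapping.lookup a v * \<alpha> v ^ Poly_Mapping.lookup b v)"
    by (simp add: lookup_add power_add)
  finally show ?thesis
    by (simp add: prod.distrib monom_eval_superset[of ?S])
qed

lemma mpoly_eval_superset:
  "finite S \<Longrightarrow> Poly_Mapping.keys p \<subseteq> S \<Longrightarrow> mpoly_eval \<alpha> p = (\<Sum>m\<in>S. Poly_Mapping.lookup p m * monom_eval \<alpha> m)"
  unfolding mpoly_eval_def by (rule sum.mono_neutral_left) (auto simp: in_keys_iff)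

lemma mpoly_eval_add: "mpoly_eval \<alpha> (p + q) = mpoly_eval \<alpha> p + mpoly_eval \<alpha> q"
proof -
  let ?S = "Poly_Mapping.keys p \<union> Poly_Mapping.keys q"
  have "mpoly_eval \<alpha> (p + q) = (\<Sum>m\<in>?S. Poly_Mapping.lookup (p + q) m * monom_eval \<alpha> m)"
    by (rule mpoly_eval_superset) (simp_all add: keys_add)
  then show ?thesis
    by (simp add: lookup_add distrib_right sum.distrib mpoly_eval_superset[of ?S])
qed

lemma mpoly_eval_zero [simp]: "mpoly_eval \<alpha> 0 = 0"
  by (simp add: mpoly_eval_def)

lemma mpoly_eval_single [simp]: "mpoly_eval \<alpha> (Poly_Mapping.single m c) = c * monom_eval \<alpha> m"
  unfolding mpoly_eval_def by auto

lemma mpoly_eval_sum: "mpoly_eval \<alpha> (\<Sum>x\<in>A. f x) = (\<Sum>x\<in>A. mpoly_eval \<alpha> (f x))"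
  by (induction A rule: infinite_finite_induct) (simp_all add: mpoly_eval_add)

lemma poly_mapping_sum_single:
  "p = (\<Sum>m\<in>Poly_Mapping.keys p. Poly_Mapping.single m (Poly_Mapping.lookup p m))"
  by (rule poly_mapping_eqI) (simp add: lookup_sum lookup_single when_def in_keys_iff)

lemma mpoly_eval_mult: "mpoly_eval \<alpha> (p * q) = mpoly_eval \<alpha> p * mpoly_eval \<alpha> q"
proof -
  have "p * q = (\<Sum>a\<in>Poly_Mapping.keys p. \<Sum>b\<in>Poly_Mapping.keys q.
      Poly_Mapping.single (a + b) (Poly_Mapping.lookup p a * Poly_Mapping.lookup q b))"
    by (subst (1 2) poly_mapping_sum_single) (simp add: sum_product mult_single)
  then have "mpoly_eval \<alpha> (p * q) = (\<Sum>a\<in>Poly_Mapping.keys p. \<Sum>b\<in>Poly_Mapping.keys q.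
      (Poly_Mapping.lookup p a * monom_eval \<alpha> a) * (Poly_Mapping.lookup q b * monom_eval \<alpha> b))"
    by (simp add: mpoly_eval_sum monom_eval_add mult_ac)
  then show ?thesis
    by (simp add: mpoly_eval_def sum_product)
qed

lemma mpoly_eval_one [simp]: "mpoly_eval \<alpha> 1 = 1"
  by (simp flip: single_one add: monom_eval_def)

lemma comm_ring_hom_mpoly_eval: "comm_ring_hom (mpoly_eval (\<alpha> :: 'v \<Rightarrow> 'a::comm_ring_1))"
  by unfold_locales (simp_all add: mpoly_eval_add mpoly_eval_mult)

lemma mpoly_eval_mconst [simp]: "mpoly_eval \<alpha> (mconst c) = c"
  by (simp add: mconst_def monom_eval_def)

lemma mpoly_eval_mvar [simp]: "mpoly_eval \<alpha> (mvar v) = \<alpha> v"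
  by (simp add: mvar_def monom_eval_def)

lemma not_constant_if_eval_monomial:
  fixes \<alpha> :: "real \<Rightarrow> nat \<times> nat \<Rightarrow> real"
  assumes eval: "\<And>t. mpoly_eval (\<alpha> t) p = K * t ^ e" and "K \<noteq> 0" and "0 < e"
  shows "\<not> is_constant_mpoly p"
proof
  assume "is_constant_mpoly p"
  then obtain c where "p = mconst c" unfolding is_constant_mpoly_def by blast
  then have "K * 1 ^ e = K * 2 ^ e" using eval[of 1] eval[of 2] by simp
  moreover have "(1::real) < 2 ^ e" using \<open>0 < e\<close> by simp
  ultimately show False using \<open>K \<noteq> 0\<close> by simp
qed

lemma is_constant_mpoly_0 [simp]: "is_constant_mpoly 0"
  unfolding is_constant_mpoly_def mconst_def by (metis single_zero)

lemma is_constant_mpoly_1 [simp]: "is_constant_mpoly 1"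
  unfolding is_constant_mpoly_def mconst_def by (metis single_one)

lemma permutes_eq_id_if_increasing:
  fixes f :: "'a \<Rightarrow> nat"
  assumes s: "s permutes S" and "finite S"
    and increasing: "\<And>r. r \<in> S \<Longrightarrow> s r \<noteq> r \<Longrightarrow> f r < f (s r)"
  shows "s = id"
proof (rule ccontr)
  assume "s \<noteq> id"
  then obtain r where moved: "s r \<noteq> r" by (metis eq_id_iff)
  then have "r \<in> S" using s by (meson permutes_not_in)
  have "f x \<le> f (s x)" if "x \<in> S" for x
    using increasing[OF that] by (cases "s x = x") auto
  then have "(\<Sum>x\<in>S. f x) < (\<Sum>x\<in>S. f (s x))"
    using \<open>finite S\<close> \<open>r \<in> S\<close> moved increasing by (intro sum_strict_mono_ex1) auto
  also have "\<dots> = (\<Sum>x\<in>S. f x)"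
    using sum.permute[OF s, of f] by (simp add: comp_def)
  finally show False by simp
qed

text \<open>A potential \<open>f\<close> that strictly increases along every nonzero entry off the
  transversal of \<open>\<sigma>\<close> rules out all other permutations in the Leibniz formula.\<close>
lemma det_eq_single_permutation_term:
  fixes M :: "'a::comm_ring_1 mat" and f :: "nat \<Rightarrow> nat"
  assumes M: "M \<in> carrier_mat n n" and \<sigma>: "\<sigma> permutes {0..<n}"
    and potential: "\<And>r c. r < n \<Longrightarrow> c < n \<Longrightarrow> M $$ (r, c) \<noteq> 0 \<Longrightarrow> r \<noteq> \<sigma> c \<Longrightarrow> f r < f (\<sigma> c)"
  shows "det M = signof \<sigma> * (\<Prod>c = 0..<n. M $$ (\<sigma> c, c))"
proof -
  let ?P = "{p. p permutes {0..<n}}"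
  let ?\<tau> = "inv_into UNIV \<sigma>"
  have inv_\<sigma>: "?\<tau> permutes {0..<n}" using \<sigma> by (rule permutes_inv)
  have vanish: "(\<Prod>r = 0..<n. M $$ (r, p r)) = 0" if p: "p permutes {0..<n}" and "p \<noteq> ?\<tau>" for p
  proof (rule ccontr)
    assume nonzero: "(\<Prod>r = 0..<n. M $$ (r, p r)) \<noteq> 0"
    have \<sigma>p: "\<sigma> \<circ> p = id"
    proof (rule permutes_eq_id_if_increasing[OF permutes_compose[OF p \<sigma>] finite_atLeastLessThan])
      fix r assume r: "r \<in> {0..<n}" and "(\<sigma> \<circ> p) r \<noteq> r"
      moreover have "M $$ (r, p r) \<noteq> 0"
        using nonzero r by (meson finite_atLeastLessThan prod_zero)
      ultimately show "f r < f ((\<sigma> \<circ> p) r)"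
        using potential[of r "p r"] permutes_in_image[OF p] by auto
    qed
    have "p = (?\<tau> \<circ> \<sigma>) \<circ> p"
      using permutes_inv_o(2)[OF \<sigma>] by simp
    also have "\<dots> = ?\<tau>"
      using \<sigma>p by (simp add: comp_assoc)
    finally show False using \<open>p \<noteq> ?\<tau>\<close> by simp
  qed
  have "det M = (\<Sum>p\<in>?P. signof p * (\<Prod>r = 0..<n. M $$ (r, p r)))"
    by (rule det_def'[OF M])
  also have "\<dots> = signof ?\<tau> * (\<Prod>r = 0..<n. M $$ (r, ?\<tau> r))
      + (\<Sum>p\<in>?P - {?\<tau>}. signof p * (\<Prod>r = 0..<n. M $$ (r, p r)))"
    by (rule sum.remove) (use inv_\<sigma> finite_permutations[of "{0..<n}"] in auto)
  also have "(\<Sum>p\<in>?P - {?\<tau>}. signof p * (\<Prod>r = 0..<n. M $$ (r, p r))) = 0"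
    by (rule sum.neutral) (use vanish in auto)
  also have "signof ?\<tau> = (signof \<sigma> :: 'a)"
  proof -
    have "permutation \<sigma>" using \<sigma> permutation_permutes by blast
    then show ?thesis by (simp add: sign_inverse)
  qed
  also have "(\<Prod>r = 0..<n. M $$ (r, ?\<tau> r)) = (\<Prod>c = 0..<n. M $$ (\<sigma> c, c))"
    using prod.permute[OF \<sigma>, of "\<lambda>r. M $$ (r, ?\<tau> r)"] \<sigma> by (simp add: permutes_inverses(2))
  finally show ?thesis by simp
qed

definition replace_col_unit :: "'a::comm_ring_1 mat \<Rightarrow> nat \<Rightarrow> nat \<Rightarrow> 'a mat" where
  "replace_col_unit M c r = mat (dim_row M) (dim_col M)
     (\<lambda>(r', c'). if c' = c then (if r' = r then 1 else 0) else M $$ (r', c'))"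

lemma replace_col_unit_carrier [simp]:
  "M \<in> carrier_mat n n \<Longrightarrow> replace_col_unit M c r \<in> carrier_mat n n"
  unfolding replace_col_unit_def by auto

lemma replace_col_unit_index:
  "M \<in> carrier_mat n n \<Longrightarrow> r' < n \<Longrightarrow> c' < n \<Longrightarrow>
   replace_col_unit M c r $$ (r', c') = (if c' = c then (if r' = r then 1 else 0) else M $$ (r', c'))"
  unfolding replace_col_unit_def by auto

lemma (in comm_ring_hom) map_mat_replace_col_unit:
  "M \<in> carrier_mat n n \<Longrightarrow> map_mat hom (replace_col_unit M c r) = replace_col_unit (map_mat hom M) c r"
  by (rule eq_matI) (auto simp: replace_col_unit_def)

lemma det_mat_delete_eq_replace_col_unit:
  fixes M :: "'a::comm_ring_1 mat"
  assumes M: "M \<in> carrier_mat n n" and c: "c < n" and r: "r < n"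
  shows "det (mat_delete M r c) = (-1) ^ (r + c) * det (replace_col_unit M c r)"
proof -
  let ?C = "replace_col_unit M c r"
  have "det ?C = (\<Sum>r'<n. ?C $$ (r', c) * cofactor ?C r' c)"
    using laplace_expansion_column[OF replace_col_unit_carrier[OF M] c] .
  also have "\<dots> = (\<Sum>r'<n. if r' = r then cofactor ?C r' c else 0)"
    by (rule sum.cong) (use M c in \<open>auto simp: replace_col_unit_index\<close>)
  also have "\<dots> = cofactor ?C r c"
    using r by simp
  also have "\<dots> = (-1) ^ (r + c) * det (mat_delete M r c)"
  proof -
    have "mat_delete ?C r c = mat_delete M r c"
      by (rule eq_matI) (use M c in \<open>auto simp: mat_delete_def replace_col_unit_def\<close>)
    then show ?thesis by (simp add: cofactor_def)
  qed
  finally have "(-1) ^ (r + c) * det ?C = ((-1) ^ (r + c) * (-1) ^ (r + c)) * det (mat_delete M r c)"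
    by (simp add: mult.assoc)
  also have "(-1) ^ (r + c) * (-1) ^ (r + c) = (1::'a)"
    by (simp flip: power_add)
  finally show ?thesis by simp
qed

lemma det_eq_diag_mult_det_replace_col_unit:
  fixes M :: "'a::comm_ring_1 mat"
  assumes M: "M \<in> carrier_mat n n" and c: "c < n"
    and col: "\<And>r. r < n \<Longrightarrow> r \<noteq> c \<Longrightarrow> M $$ (r, c) = 0"
  shows "det M = M $$ (c, c) * det (replace_col_unit M c c)"
proof -
  have "det M = (\<Sum>r<n. M $$ (r, c) * cofactor M r c)"
    by (rule laplace_expansion_column[OF M c])
  also have "\<dots> = (\<Sum>r<n. if r = c then M $$ (c, c) * cofactor M c c else 0)"
    by (rule sum.cong) (use col in auto)
  also have "\<dots> = M $$ (c, c) * cofactor M c c"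
    using c by simp
  also have "cofactor M c c = det (replace_col_unit M c c)"
    unfolding cofactor_def det_mat_delete_eq_replace_col_unit[OF M c c]
    by (simp add: neg_one_even_power)
  finally show ?thesis .
qed

lemma det_zero_if_col_sums_zero:
  fixes M :: "'a::comm_ring_1 mat"
  assumes M: "M \<in> carrier_mat n n" and "0 < n"
    and col_sums: "\<And>c. c < n \<Longrightarrow> (\<Sum>r<n. M $$ (r, c)) = 0"
  shows "det M = 0"
proof -
  define P :: "'a mat" where "P = mat n n (\<lambda>(r, c). if r = 0 \<or> r = c then 1 else 0)"
  have P: "P \<in> carrier_mat n n" unfolding P_def by simp
  have "diag_mat P = replicate n 1"
    by (rule nth_equalityI) (auto simp: diag_mat_def P_def)
  then have "det P = 1"
    using det_upper_triangular[OF _ P] by (simp add: P_def upper_triangular_def)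
  have first_row: "(P * M) $$ (0, c) = 0" if "c < n" for c
    using \<open>0 < n\<close> that M col_sums
    by (simp add: P_def scalar_prod_def atLeast0LessThan)
  have "det (P * M) = 0"
    unfolding det_def'[OF mult_carrier_mat[OF P M]]
  proof (intro sum.neutral ballI)
    fix p assume "p \<in> {p. p permutes {0..<n}}"
    then have "p 0 < n" using \<open>0 < n\<close> permutes_in_image by fastforce
    then have "(\<Prod>r = 0..<n. (P * M) $$ (r, p r)) = 0"
      using \<open>0 < n\<close> first_row by (intro prod_zero) (auto intro!: bexI[of _ 0])
    then show "signof p * (\<Prod>r = 0..<n. (P * M) $$ (r, p r)) = 0" by simp
  qed
  then show ?thesis using det_mult[OF P M] \<open>det P = 1\<close> by simp
qed

lemma char_poly_matrix_index:
  assumes "A \<in> carrier_mat n n" and "r < n" and "c < n"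
  shows "char_poly_matrix A $$ (r, c) = (if r = c then [:- A $$ (r, c), 1:] else [:- A $$ (r, c):])"
  using assms by (simp add: char_poly_matrix_def)

lemma mat_delete_char_poly_matrix:
  assumes A: "A \<in> carrier_mat n n" and "a < n"
  shows "mat_delete (char_poly_matrix A) a a = char_poly_matrix (mat_delete A a a)"
proof -
  let ?ins = "\<lambda>x. if x < a then x else Suc x"
  have CA: "char_poly_matrix A \<in> carrier_mat n n" using A by simp
  have D: "mat_delete A a a \<in> carrier_mat (n - 1) (n - 1)" using A by (rule mat_delete_carrier)
  show ?thesis
  proof (rule eq_matI)
    fix r c assume "r < dim_row (char_poly_matrix (mat_delete A a a))"
      and "c < dim_col (char_poly_matrix (mat_delete A a a))"
    then have r: "r < n - 1" and c: "c < n - 1" using carrier_matD[OF char_poly_matrix_closed[OF D]] by auto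
    then have ins: "?ins r < n" "?ins c < n" "?ins r = ?ins c \<longleftrightarrow> r = c" by auto
    have "mat_delete (char_poly_matrix A) a a $$ (r, c) = char_poly_matrix A $$ (?ins r, ?ins c)"
      using r c carrier_matD[OF CA] by (simp add: mat_delete_def)
    also have "\<dots> = (if r = c then [:- A $$ (?ins r, ?ins c), 1:] else [:- A $$ (?ins r, ?ins c):])"
      using char_poly_matrix_index[OF A ins(1,2)] ins(3) by simp
    also have "A $$ (?ins r, ?ins c) = mat_delete A a a $$ (r, c)"
      using r c carrier_matD[OF A] by (simp add: mat_delete_def)
    also have "(if r = c then [:- mat_delete A a a $$ (r, c), 1:] else [:- mat_delete A a a $$ (r, c):])
        = char_poly_matrix (mat_delete A a a) $$ (r, c)"
      using char_poly_matrix_index[OF D r c] by simp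
    finally show "mat_delete (char_poly_matrix A) a a $$ (r, c) = char_poly_matrix (mat_delete A a a) $$ (r, c)" .
  qed (use carrier_matD[OF CA] carrier_matD[OF char_poly_matrix_closed[OF D]] in auto)
qed

lemma coeff_0_char_poly: "A \<in> carrier_mat n n \<Longrightarrow> coeff (char_poly A) 0 = det (- A)"
proof -
  assume A: "A \<in> carrier_mat n n"
  interpret coeff_0: comm_ring_hom "\<lambda>p :: 'a poly. coeff p 0"
    by unfold_locales (auto simp: coeff_mult_0)
  have "map_mat (\<lambda>p. coeff p 0) (char_poly_matrix A) = - A"
    by (rule eq_matI) (use A carrier_matD[OF char_poly_matrix_closed[OF A]] in \<open>auto simp: char_poly_matrix_index[OF A]\<close>)
  then show ?thesis
    by (simp add: char_poly_def flip: coeff_0.hom_det)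
qed

lemma degree_replace_col_unit_char_poly_matrix:
  assumes "A \<in> carrier_mat n n" and "r < n" and "c < n"
  shows "degree (replace_col_unit (char_poly_matrix A) c0 r0 $$ (r, c)) \<le> (if r = c then 1 else 0)"
  using assms by (simp add: replace_col_unit_index[OF char_poly_matrix_closed[OF assms(1)]] char_poly_matrix_index)

lemma degree_prod_perm_le_card_fixed_points:
  fixes C :: "'a::comm_ring_1 poly mat"
  assumes deg: "\<And>r c. r < n \<Longrightarrow> c < n \<Longrightarrow> degree (C $$ (r, c)) \<le> (if r = c then 1 else 0)"
    and p: "p permutes {0..<n}"
  shows "degree (\<Prod>r = 0..<n. C $$ (r, p r)) \<le> card {r \<in> {0..<n}. p r = r}"
proof -
  have "degree (\<Prod>r = 0..<n. C $$ (r, p r)) \<le> (\<Sum>r = 0..<n. degree (C $$ (r, p r)))"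
    using degree_prod_sum_le[of "{0..<n}" "\<lambda>r. C $$ (r, p r)"] by (simp add: comp_def)
  also have "\<dots> \<le> (\<Sum>r = 0..<n. if p r = r then 1 else 0)"
  proof (rule sum_mono)
    fix r assume "r \<in> {0..<n}"
    then show "degree (C $$ (r, p r)) \<le> (if p r = r then 1 else 0)"
      using deg[of r "p r"] permutes_in_image[OF p, of r] by (cases "p r = r") auto
  qed
  also have "\<dots> = card {r \<in> {0..<n}. p r = r}"
    by (simp add: sum.If_cases) (intro arg_cong[where f = card]; auto)
  finally show ?thesis .
qed

lemma inj_on_funpow_until_preimage:
  assumes "inj f" and "f y = x" and avoid: "\<And>s. s < L \<Longrightarrow> (f ^^ s) x \<noteq> y"
  shows "inj_on (\<lambda>s. (f ^^ s) x) {..L}"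
proof (rule linorder_inj_onI')
  fix a b assume "a \<in> {..L}" "b \<in> {..L}" "a < b"
  then obtain d where b: "b = Suc (a + d)" using less_iff_Suc_add by auto
  with \<open>b \<in> {..L}\<close> have "d < L" by simp
  show "(f ^^ a) x \<noteq> (f ^^ b) x"
  proof
    assume "(f ^^ a) x = (f ^^ b) x"
    also have "(f ^^ b) x = (f ^^ a) (f ((f ^^ d) x))"
      unfolding b by (simp only: add_Suc_right[symmetric] funpow_add funpow.simps(2) comp_apply)
    finally have "f y = f ((f ^^ d) x)"
      unfolding \<open>f y = x\<close> by (rule injD[OF inj_fn[OF \<open>inj f\<close>]])
    then have "y = (f ^^ d) x" by (rule injD[OF \<open>inj f\<close>])
    with avoid[OF \<open>d < L\<close>] show False by simp
  qed
qed

lemma prod_unit_or_two_values: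
  fixes u v :: "'a::comm_monoid_mult"
  assumes "finite S" and "P \<subseteq> S" and "a \<in> P"
  shows "(\<Prod>x\<in>S. if x = a then 1 else if x \<in> P then u else v) = u ^ (card P - 1) * v ^ (card S - card P)"
proof -
  let ?g = "\<lambda>x. if x = a then 1 else if x \<in> P then u else v"
  have fin: "finite P" using assms(1,2) finite_subset by blast
  have "prod ?g S = prod ?g (S - P) * prod ?g P"
    by (rule prod.subset_diff[OF assms(2,1)])
  also have "prod ?g (S - P) = prod (\<lambda>_. v) (S - P)"
    by (rule prod.cong) (use \<open>a \<in> P\<close> in auto)
  also have "\<dots> = v ^ (card S - card P)"
    using card_Diff_subset[OF fin assms(2)] by simp
  also have "prod ?g P = prod ?g (P - {a})"
    using prod.remove[OF fin \<open>a \<in> P\<close>, of ?g] by simp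
  also have "\<dots> = u ^ (card P - 1)"
    using fin \<open>a \<in> P\<close> by simp
  finally show ?thesis by (simp add: mult.commute)
qed

lemma coeff_neg_one_power_mult: "coeff ((-1) ^ m * p) k = (-1) ^ m * coeff (p :: 'a::comm_ring_1 poly) k"
  by (induction m) auto

lemma dist_path_le: "(u, v) \<in> E ^^ m \<Longrightarrow> dist_path E u v \<le> m"
  unfolding dist_path_def by (rule Least_le)

lemma dist_path_self [simp]: "dist_path E v v = 0"
  using dist_path_le[of v v 0] by simp

locale strongly_connected_digraph =
  fixes n :: nat and E :: "(nat \<times> nat) set"
  assumes edges_in_range: "E \<subseteq> {1..n} \<times> {1..n}"
    and strongly_connected: "strongly_connected n E"
begin

lemma edge_in_range: "(u, v) \<in> E \<Longrightarrow> u \<in> {1..n} \<and> v \<in> {1..n}"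
  using edges_in_range by auto

lemma reaches_in_dist_path:
  assumes "u \<in> {1..n}" and "v \<in> {1..n}"
  shows "(u, v) \<in> E ^^ dist_path E u v"
proof -
  have "(u, v) \<in> E\<^sup>*" using strongly_connected assms unfolding strongly_connected_def by auto
  then obtain m where "(u, v) \<in> E ^^ m" using rtrancl_power by blast
  then show ?thesis unfolding dist_path_def by (rule LeastI)
qed

lemma dist_path_eq_0_iff:
  "u \<in> {1..n} \<Longrightarrow> v \<in> {1..n} \<Longrightarrow> dist_path E u v = 0 \<longleftrightarrow> u = v"
  using reaches_in_dist_path[of u v] by auto

definition next_hop :: "nat \<Rightarrow> nat \<Rightarrow> nat" where
  "next_hop \<rho> w = (SOME y. (w, y) \<in> E \<and> Suc (dist_path E y \<rho>) = dist_path E w \<rho>)"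

lemma next_hop:
  assumes w: "w \<in> {1..n}" and \<rho>: "\<rho> \<in> {1..n}" and "w \<noteq> \<rho>"
  shows "(w, next_hop \<rho> w) \<in> E" and "next_hop \<rho> w \<in> {1..n}"
    and "Suc (dist_path E (next_hop \<rho> w) \<rho>) = dist_path E w \<rho>"
proof -
  have "dist_path E w \<rho> \<noteq> 0" using dist_path_eq_0_iff[OF w \<rho>] \<open>w \<noteq> \<rho>\<close> by simp
  then obtain d where d: "dist_path E w \<rho> = Suc d" using not0_implies_Suc by blast
  then obtain y where y: "(w, y) \<in> E" "(y, \<rho>) \<in> E ^^ d"
    using reaches_in_dist_path[OF w \<rho>] relpow_Suc_D2 by fastforce
  have "dist_path E w \<rho> \<le> Suc (dist_path E y \<rho>)"
    using relpow_Suc_I2[OF y(1) reaches_in_dist_path[OF _ \<rho>]] edge_in_range[OF y(1)] dist_path_le by blast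
  with d dist_path_le[OF y(2)] y(1)
  have "(w, y) \<in> E \<and> Suc (dist_path E y \<rho>) = dist_path E w \<rho>" by simp
  then have "(w, next_hop \<rho> w) \<in> E \<and> Suc (dist_path E (next_hop \<rho> w) \<rho>) = dist_path E w \<rho>"
    unfolding next_hop_def by (rule someI)
  then show "(w, next_hop \<rho> w) \<in> E" and "Suc (dist_path E (next_hop \<rho> w) \<rho>) = dist_path E w \<rho>"
    by simp_all
  then show "next_hop \<rho> w \<in> {1..n}" using edge_in_range by blast
qed

end

locale compartmental_model = strongly_connected_digraph +
  fixes Leak :: "nat set"
  assumes no_self_loops: "\<forall>k. (k, k) \<notin> E" and leaks_in_range: "Leak \<subseteq> {1..n}"
begin

abbreviation A :: "mpoly mat" where "A \<equiv> comp_matrix n E Leak"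

lemma comp_matrix_carrier [simp]: "A \<in> carrier_mat n n"
  by (simp add: comp_matrix_def)

lemma comp_matrix_dim [simp]: "dim_row A = n" "dim_col A = n"
  by (simp_all add: comp_matrix_def)

lemma comp_matrix_index: "r < n \<Longrightarrow> c < n \<Longrightarrow> A $$ (r, c) = comp_entry E Leak (r + 1) (c + 1)"
  by (simp add: comp_matrix_def)

lemma edge_if_comp_matrix_nonzero:
  "r < n \<Longrightarrow> c < n \<Longrightarrow> r \<noteq> c \<Longrightarrow> A $$ (r, c) \<noteq> 0 \<Longrightarrow> (c + 1, r + 1) \<in> E"
  by (auto simp: comp_matrix_index comp_entry_def split: if_splits)

lemma comp_matrix_col_sum_no_leak:
  assumes "Leak = {}" and c: "c < n"
  shows "(\<Sum>r<n. A $$ (r, c)) = 0"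
proof -
  let ?k = "c + 1"
  have "(\<Sum>r<n. A $$ (r, c)) = (\<Sum>l\<in>{1..n}. comp_entry E Leak l ?k)"
    using c by (simp add: comp_matrix_index sum.atLeast1_atMost_eq)
  also have "\<dots> = comp_entry E Leak ?k ?k + (\<Sum>l\<in>{1..n} - {?k}. comp_entry E Leak l ?k)"
    using c by (intro sum.remove) auto
  also have "(\<Sum>l\<in>{1..n} - {?k}. comp_entry E Leak l ?k)
      = (\<Sum>l\<in>{1..n} - {?k}. if (?k, l) \<in> E then mvar (l, ?k) else 0)"
    by (rule sum.cong) (auto simp: comp_entry_def)
  also have "\<dots> = (\<Sum>l\<in>{l \<in> {1..n} - {?k}. (?k, l) \<in> E}. mvar (l, ?k))"
    by (rule sum.inter_filter[symmetric]) simp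
  also have "{l \<in> {1..n} - {?k}. (?k, l) \<in> E} = {m. (?k, m) \<in> E}"
    using edges_in_range no_self_loops by auto
  finally show ?thesis using \<open>Leak = {}\<close> by (simp add: comp_entry_def)
qed

lemma lhs_coeff_0_no_leak:
  assumes "Leak = {}" and "0 < n"
  shows "lhs_coeff n E Leak 0 = 0"
proof -
  have "lhs_coeff n E Leak 0 = det (- A)"
    by (simp add: lhs_coeff_def coeff_0_char_poly[of _ n] flip: char_poly_def)
  also have "\<dots> = 0"
  proof (rule det_zero_if_col_sums_zero[of _ n])
    fix c assume "c < n"
    have "(\<Sum>r<n. (- A) $$ (r, c)) = - (\<Sum>r<n. A $$ (r, c))"
      unfolding sum_negf[symmetric] by (rule sum.cong) (use \<open>c < n\<close> in auto)
    then show "(\<Sum>r<n. (- A) $$ (r, c)) = 0"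
      using comp_matrix_col_sum_no_leak[OF \<open>Leak = {}\<close> \<open>c < n\<close>] by simp
  qed (use \<open>0 < n\<close> in auto)
  finally show ?thesis .
qed

definition tree_weights :: "nat \<Rightarrow> real \<Rightarrow> nat \<times> nat \<Rightarrow> real" where
  "tree_weights \<rho> t = (\<lambda>(l, k).
     if k \<in> {1..n} \<and> k \<noteq> \<rho> \<and> l = next_hop \<rho> k \<or> l = 0 \<and> k = \<rho> \<and> \<rho> \<in> Leak then t else 0)"

definition spec_matrix :: "nat \<Rightarrow> real \<Rightarrow> real mat" where
  "spec_matrix \<rho> t = map_mat (mpoly_eval (tree_weights \<rho> t)) A"

lemma spec_matrix_carrier [simp]: "spec_matrix \<rho> t \<in> carrier_mat n n"
  by (simp add: spec_matrix_def)

lemma spec_matrix_index: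
  assumes \<rho>: "\<rho> \<in> {1..n}" and r: "r < n" and c: "c < n"
  shows "spec_matrix \<rho> t $$ (r, c) =
    (if r = c then (if r + 1 \<noteq> \<rho> \<or> \<rho> \<in> Leak then - t else 0)
     else if c + 1 \<noteq> \<rho> \<and> r + 1 = next_hop \<rho> (c + 1) then t else 0)"
proof -
  interpret eval: comm_ring_hom "mpoly_eval (tree_weights \<rho> t)"
    by (rule comm_ring_hom_mpoly_eval)
  have spec: "spec_matrix \<rho> t $$ (r, c) = mpoly_eval (tree_weights \<rho> t) (comp_entry E Leak (r + 1) (c + 1))"
    using r c by (simp add: spec_matrix_def comp_matrix_index)
  show ?thesis
  proof (cases "r = c")
    case True
    let ?l = "c + 1"
    have l: "?l \<in> {1..n}" using c by simp
    have "mpoly_eval (tree_weights \<rho> t) (\<Sum>m\<in>{m. (?l, m) \<in> E}. mvar (m, ?l))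
        = (\<Sum>m\<in>{m. (?l, m) \<in> E}. if ?l \<noteq> \<rho> \<and> m = next_hop \<rho> ?l then t else 0)"
      unfolding mpoly_eval_sum by (rule sum.cong) (auto simp: tree_weights_def dest: edge_in_range)
    also have "\<dots> = (if ?l \<noteq> \<rho> then t else 0)"
    proof (cases "?l = \<rho>")
      case False
      have "finite {m. (?l, m) \<in> E}"
        by (rule finite_subset[of _ "{1..n}"]) (use edges_in_range in auto)
      then show ?thesis using False next_hop(1)[OF l \<rho> False] by simp
    qed simp
    moreover have "tree_weights \<rho> t (0, ?l) = (if ?l = \<rho> \<and> \<rho> \<in> Leak then t else 0)"
      using next_hop(2)[OF l \<rho>] by (auto simp: tree_weights_def)
    ultimately show ?thesis
      using spec True by (simp add: comp_entry_def eval.hom_uminus eval.hom_minus)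
  next
    case False
    then show ?thesis
      using spec c next_hop(1)[of "c + 1" \<rho>] \<rho>
      by (auto simp: comp_entry_def tree_weights_def)
  qed
qed

lemma char_poly_matrix_spec_index:
  assumes "\<rho> \<in> {1..n}" and "r < n" and "c < n"
  shows "char_poly_matrix (spec_matrix \<rho> t) $$ (r, c) =
    (if r = c then [:if r + 1 \<noteq> \<rho> \<or> \<rho> \<in> Leak then t else 0, 1:]
     else if c + 1 \<noteq> \<rho> \<and> r + 1 = next_hop \<rho> (c + 1) then [:- t:] else 0)"
  using assms by (simp add: char_poly_matrix_index[of _ n] spec_matrix_index)

lemma eval_coeff_char_poly:
  "mpoly_eval (tree_weights \<rho> t) (coeff (char_poly A) k) = coeff (char_poly (spec_matrix \<rho> t)) k"
proof -
  interpret eval: comm_ring_hom "mpoly_eval (tree_weights \<rho> t)" by (rule comm_ring_hom_mpoly_eval)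
  show ?thesis
    by (simp add: spec_matrix_def eval.char_poly_hom[of _ n] coeff_map_poly)
qed

end

locale io_compartmental_model = compartmental_model +
  fixes i j :: nat
  assumes output_in_range: "i \<in> {1..n}" and input_in_range: "j \<in> {1..n}"
begin

abbreviation L :: nat where "L \<equiv> dist_path E j i"

text \<open>Up to sign, the determinant of this matrix is the minor \<open>det ((\<partial>I - M)\<^bsup>j,i\<^esup>)\<close>
  (\<open>det_minor_char_matrix\<close>); matrix indices are 0-based, compartments 1-based.\<close>
definition minor_char_matrix :: "'a::comm_ring_1 mat \<Rightarrow> 'a poly mat" where
  "minor_char_matrix M = replace_col_unit (char_poly_matrix M) (i - 1) (j - 1)"

lemma minor_char_matrix_carrier [simp]: "M \<in> carrier_mat n n \<Longrightarrow> minor_char_matrix M \<in> carrier_mat n n"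
  by (simp add: minor_char_matrix_def)

lemma minor_char_matrix_index:
  assumes "M \<in> carrier_mat n n" and "r < n" and "c < n"
  shows "minor_char_matrix M $$ (r, c) =
    (if c = i - 1 then (if r = j - 1 then 1 else 0)
     else if r = c then [:- M $$ (r, c), 1:] else [:- M $$ (r, c):])"
  using assms by (simp add: minor_char_matrix_def replace_col_unit_index[of _ n] char_poly_matrix_index)

lemma det_minor_char_matrix:
  "M \<in> carrier_mat n n \<Longrightarrow>
   det (mat_delete (char_poly_matrix M) (j - 1) (i - 1)) = (-1) ^ (j - 1 + (i - 1)) * det (minor_char_matrix M)"
  unfolding minor_char_matrix_def
  by (rule det_mat_delete_eq_replace_col_unit[of _ n]) (use output_in_range input_in_range in auto)

lemma rhs_coeff_eq_minor_char_matrix: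
  "rhs_coeff n E Leak i j k = (-1) ^ (j - 1 + (i - 1)) * coeff (det (minor_char_matrix A)) k"
  unfolding rhs_coeff_def det_minor_char_matrix[OF comp_matrix_carrier] by (rule coeff_neg_one_power_mult)

definition path_vertex :: "nat \<Rightarrow> nat" where
  "path_vertex s = (next_hop i ^^ s) j"

lemma path_vertex:
  "s \<le> L \<Longrightarrow> path_vertex s \<in> {1..n} \<and> dist_path E (path_vertex s) i + s = L"
proof (induction s)
  case 0
  then show ?case using input_in_range by (simp add: path_vertex_def)
next
  case (Suc s)
  then have v: "path_vertex s \<in> {1..n}" and d: "dist_path E (path_vertex s) i + s = L" by auto
  then have "path_vertex s \<noteq> i" using Suc.prems by auto
  then show ?case using next_hop[OF v output_in_range] d by (simp add: path_vertex_def)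
qed

lemma path_vertex_0 [simp]: "path_vertex 0 = j"
  by (simp add: path_vertex_def)

lemma path_vertex_Suc: "path_vertex (Suc s) = next_hop i (path_vertex s)"
  by (simp add: path_vertex_def)

lemma path_vertex_last: "path_vertex L = i"
  using path_vertex[of L] dist_path_eq_0_iff output_in_range by auto

lemma path_vertex_pred_eq_iff:
  assumes "s \<le> L" and "s' \<le> L"
  shows "path_vertex s - 1 = path_vertex s' - 1 \<longleftrightarrow> s = s'"
proof
  assume "path_vertex s - 1 = path_vertex s' - 1"
  moreover have "path_vertex s \<in> {1..n}" "path_vertex s' \<in> {1..n}"
    using path_vertex assms by auto
  ultimately have "path_vertex s = path_vertex s'" by auto
  then show "s = s'" using path_vertex[OF assms(1)] path_vertex[OF assms(2)] by simp
qed simp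

text \<open>The 0-based indices of a shortest path \<open>j = v\<^sub>0, \<dots>, v\<^sub>L = i\<close>; \<open>path_perm\<close> maps
  \<open>v\<^sub>s\<close> to \<open>v\<^sub>s\<^sub>+\<^sub>1\<close> and \<open>i\<close> back to \<open>j\<close>.\<close>
definition path_cycle :: "nat list" where
  "path_cycle = map (\<lambda>s. path_vertex s - 1) [0..<Suc L]"

lemma set_path_cycle: "set path_cycle = (\<lambda>s. path_vertex s - 1) ` {..L}"
  unfolding path_cycle_def set_map set_upt atLeast0LessThan lessThan_Suc_atMost ..

lemma length_path_cycle: "length path_cycle = Suc L"
  by (simp add: path_cycle_def del: upt_Suc)

lemma path_cycle_nth: "s \<le> L \<Longrightarrow> path_cycle ! s = path_vertex s - 1"
  by (simp add: path_cycle_def nth_map del: upt_Suc)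

lemma mem_path_cycle: "c \<in> set path_cycle \<longleftrightarrow> (\<exists>s \<le> L. c = path_vertex s - 1)"
  by (simp only: set_path_cycle image_iff Bex_def atMost_iff)

lemma distinct_path_cycle: "distinct path_cycle"
  unfolding path_cycle_def distinct_map
proof (intro conjI inj_onI)
  fix s s' assume "s \<in> set [0..<Suc L]" "s' \<in> set [0..<Suc L]" "path_vertex s - 1 = path_vertex s' - 1"
  then show "s = s'" using path_vertex_pred_eq_iff[of s s'] by (simp del: upt_Suc)
qed simp

lemma path_cycle_subset: "set path_cycle \<subseteq> {0..<n}"
  using path_vertex by (fastforce simp: set_path_cycle)

lemma card_path_cycle: "card (set path_cycle) = Suc L"
  using distinct_card[OF distinct_path_cycle] by (simp add: path_cycle_def del: upt_Suc)

lemma dist_path_less: "L < n"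
  using card_mono[OF _ path_cycle_subset] card_path_cycle by simp

lemma output_on_path_cycle: "i - 1 \<in> set path_cycle"
  using path_vertex_last by (force simp: set_path_cycle)

lemma dist_path_on_cycle:
  assumes "c \<in> set path_cycle"
  shows "dist_path E (c + 1) i \<le> L"
proof -
  obtain s where s: "s \<le> L" "c = path_vertex s - 1" using assms unfolding mem_path_cycle by blast
  have "1 \<le> path_vertex s" "dist_path E (path_vertex s) i + s = L" using path_vertex[OF s(1)] by simp_all
  with s(2) show ?thesis by simp
qed

definition path_perm :: "nat \<Rightarrow> nat" where
  "path_perm = cycle_of_list path_cycle"

lemma path_perm_permutes: "path_perm permutes {0..<n}"
  unfolding path_perm_def using cycle_permutes path_cycle_subset by (rule permutes_subset)

lemma path_perm_outside: "c \<notin> set path_cycle \<Longrightarrow> path_perm c = c"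
  unfolding path_perm_def by (rule id_outside_supp)

lemma path_perm_nth:
  assumes "s \<le> L"
  shows "path_perm (path_vertex s - 1) = path_vertex (Suc s mod Suc L) - 1"
proof -
  have s: "s < length path_cycle" using assms by (simp add: length_path_cycle)
  have rotate: "map path_perm path_cycle = rotate1 path_cycle"
    using cyclic_rotation[OF distinct_path_cycle, of 1] by (simp add: path_perm_def)
  have "path_perm (path_cycle ! s) = map path_perm path_cycle ! s"
    using s by simp
  also have "\<dots> = path_cycle ! (Suc s mod Suc L)"
    unfolding rotate using s by (simp add: nth_rotate1 length_path_cycle)
  finally show ?thesis
    using assms by (simp add: path_cycle_nth)
qed

lemma path_perm_output: "path_perm (i - 1) = j - 1"
  using path_perm_nth[of L] by (simp add: path_vertex_last)

lemma path_perm_step: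
  assumes "c \<in> set path_cycle" and "c \<noteq> i - 1"
  shows "c + 1 \<in> {1..n}" "c + 1 \<noteq> i" "path_perm c + 1 = next_hop i (c + 1)"
    "path_perm c \<in> set path_cycle" "Suc (dist_path E (path_perm c + 1) i) = dist_path E (c + 1) i"
proof -
  obtain s where s: "s \<le> L" "c = path_vertex s - 1" using assms(1) unfolding mem_path_cycle by blast
  have "s \<noteq> L" using assms(2) s(2) path_vertex_last by auto
  with s(1) have "s < L" by simp
  have v: "path_vertex s \<in> {1..n}" using path_vertex[OF s(1)] by simp
  then have c1: "c + 1 = path_vertex s" using s by simp
  then show "c + 1 \<in> {1..n}" and ci: "c + 1 \<noteq> i" using v assms(2) by auto
  have pc: "path_perm c = path_vertex (Suc s) - 1"
    using path_perm_nth[OF s(1)] \<open>s < L\<close> s(2) by simp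
  have "path_vertex (Suc s) \<in> {1..n}" using path_vertex[of "Suc s"] \<open>s < L\<close> by simp
  then show next_c: "path_perm c + 1 = next_hop i (c + 1)"
    using pc c1 by (simp add: path_vertex_Suc)
  show "path_perm c \<in> set path_cycle"
    unfolding set_path_cycle by (rule image_eqI[where x = "Suc s"]) (use pc \<open>s < L\<close> in simp_all)
  show "Suc (dist_path E (path_perm c + 1) i) = dist_path E (c + 1) i"
    unfolding next_c using next_hop(3) \<open>c + 1 \<in> {1..n}\<close> output_in_range ci by simp
qed

lemma minor_char_matrix_spec_index:
  assumes "r < n" and "c < n"
  shows "minor_char_matrix (spec_matrix i t) $$ (r, c) =
    (if c = i - 1 then (if r = j - 1 then 1 else 0)
     else if r = c then [:t, 1:] else if r + 1 = next_hop i (c + 1) then [:- t:] else 0)"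
  using assms output_in_range
  by (auto simp: minor_char_matrix_def replace_col_unit_index[of _ n] char_poly_matrix_spec_index)

text \<open>Rows on the path are ranked by their position on it, all other rows above them by their
  distance to \<open>i\<close>.\<close>
definition path_potential :: "nat \<Rightarrow> nat" where
  "path_potential r =
     (if r \<in> set path_cycle then L - dist_path E (r + 1) i else L + 1 + dist_path E (r + 1) i)"

lemma path_potential_increasing:
  assumes r: "r < n" and c: "c < n"
    and nonzero: "minor_char_matrix (spec_matrix i t) $$ (r, c) \<noteq> 0" and "r \<noteq> path_perm c"
  shows "path_potential r < path_potential (path_perm c)"
proof (cases "c \<in> set path_cycle")
  case True
  have "c \<noteq> i - 1"
  proof
    assume "c = i - 1"
    then have "r = j - 1"
      using nonzero minor_char_matrix_spec_index[OF r c] by (auto split: if_splits)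
    then show False using \<open>r \<noteq> path_perm c\<close> \<open>c = i - 1\<close> path_perm_output by simp
  qed
  note step = path_perm_step[OF True this]
  have "r = c"
  proof (rule ccontr)
    assume "r \<noteq> c"
    then have "r + 1 = next_hop i (c + 1)"
      using nonzero \<open>c \<noteq> i - 1\<close> by (simp add: minor_char_matrix_spec_index[OF r c] split: if_splits)
    then show False using step(3) \<open>r \<noteq> path_perm c\<close> by simp
  qed
  have "L - dist_path E (c + 1) i < L - dist_path E (path_perm c + 1) i"
    using step(5) dist_path_on_cycle[OF True] by arith
  then show ?thesis using True step(4) \<open>r = c\<close> by (simp add: path_potential_def)
next
  case False
  then have "c \<noteq> i - 1" "path_perm c = c"
    using output_on_path_cycle path_perm_outside by auto
  moreover have "i - 1 + 1 = i" using output_in_range by simp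
  ultimately have "r + 1 = next_hop i (c + 1)" "c + 1 \<noteq> i"
    using nonzero \<open>r \<noteq> path_perm c\<close>
    by (auto simp: minor_char_matrix_spec_index[OF r c] split: if_splits)
  then have "Suc (dist_path E (r + 1) i) = dist_path E (c + 1) i"
    using next_hop(3)[OF _ output_in_range] c by simp
  moreover have "path_potential r \<le> L + 1 + dist_path E (r + 1) i"
  proof -
    have "L - dist_path E (r + 1) i \<le> L + 1 + dist_path E (r + 1) i" by arith
    then show ?thesis by (simp add: path_potential_def)
  qed
  ultimately show ?thesis
    using False \<open>path_perm c = c\<close> by (simp add: path_potential_def)
qed

lemma minor_char_matrix_spec_path_perm:
  assumes c: "c < n"
  shows "minor_char_matrix (spec_matrix i t) $$ (path_perm c, c) =
    (if c = i - 1 then 1 else if c \<in> set path_cycle then [:- t:] else [:t, 1:])"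
proof -
  have pc: "path_perm c < n" using permutes_in_image[OF path_perm_permutes] c by simp
  show ?thesis
  proof (cases "c \<in> set path_cycle \<and> c \<noteq> i - 1")
    case True
    then have on_cycle: "c \<in> set path_cycle" and "c \<noteq> i - 1" by simp_all
    note step = path_perm_step[OF this]
    have "path_perm c \<noteq> c"
    proof
      assume "path_perm c = c"
      then show False using step(5) by simp
    qed
    then show ?thesis
      using on_cycle \<open>c \<noteq> i - 1\<close> step(3)
      by (simp only: minor_char_matrix_spec_index[OF pc c] if_True if_False simp_thms)
  next
    case not_on_cycle: False
    show ?thesis
    proof (cases "c = i - 1")
      case True
      then show ?thesis using path_perm_output minor_char_matrix_spec_index[OF pc c] by simp
    next
      case False
      then have "c \<notin> set path_cycle" using not_on_cycle by blast
      then have "path_perm c = c" by (rule path_perm_outside)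
      then show ?thesis
        using False \<open>c \<notin> set path_cycle\<close> minor_char_matrix_spec_index[OF pc c] by simp
    qed
  qed
qed

lemma det_minor_char_matrix_spec:
  "det (minor_char_matrix (spec_matrix i t)) = signof path_perm * ([:- t:] ^ L * [:t, 1:] ^ (n - 1 - L))"
proof -
  have "det (minor_char_matrix (spec_matrix i t))
      = signof path_perm * (\<Prod>c = 0..<n. minor_char_matrix (spec_matrix i t) $$ (path_perm c, c))"
    by (rule det_eq_single_permutation_term[where f = path_potential,
          OF minor_char_matrix_carrier[OF spec_matrix_carrier] path_perm_permutes path_potential_increasing])
  also have "(\<Prod>c = 0..<n. minor_char_matrix (spec_matrix i t) $$ (path_perm c, c))
      = (\<Prod>c\<in>{0..<n}. if c = i - 1 then 1 else if c \<in> set path_cycle then [:- t:] else [:t, 1:])"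
    by (rule prod.cong) (simp_all add: minor_char_matrix_spec_path_perm)
  also have "\<dots> = [:- t:] ^ L * [:t, 1:] ^ (n - 1 - L)"
    using path_cycle_subset card_path_cycle output_on_path_cycle
    by (subst prod_unit_or_two_values) auto
  finally show ?thesis .
qed

lemma eval_rhs_coeff:
  "mpoly_eval (tree_weights i t) (rhs_coeff n E Leak i j k)
   = (-1) ^ (j - 1 + (i - 1)) * coeff (det (minor_char_matrix (spec_matrix i t))) k"
proof -
  interpret eval: map_poly_comm_ring_hom "mpoly_eval (tree_weights i t)"
    by (rule map_poly_comm_ring_hom.intro, rule comm_ring_hom_mpoly_eval)
  have minor_eval: "map_mat (map_poly (mpoly_eval (tree_weights i t))) (minor_char_matrix A)
      = minor_char_matrix (spec_matrix i t)"
    by (simp add: minor_char_matrix_def spec_matrix_def eval.map_mat_replace_col_unit[of _ n]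
        eval.base.char_poly_matrix_hom[of _ n])
  have "mpoly_eval (tree_weights i t) (coeff (det (minor_char_matrix A)) k)
      = coeff (map_poly (mpoly_eval (tree_weights i t)) (det (minor_char_matrix A))) k"
    by (simp add: coeff_map_poly)
  also have "map_poly (mpoly_eval (tree_weights i t)) (det (minor_char_matrix A))
      = det (map_mat (map_poly (mpoly_eval (tree_weights i t))) (minor_char_matrix A))"
    by (rule eval.hom_det[symmetric])
  also note minor_eval
  finally have "mpoly_eval (tree_weights i t) (coeff (det (minor_char_matrix A)) k)
      = coeff (det (minor_char_matrix (spec_matrix i t))) k" .
  then show ?thesis
    by (simp add: rhs_coeff_eq_minor_char_matrix eval.base.hom_mult eval.base.hom_power
        eval.base.hom_uminus)
qed

lemma eval_rhs_coeff_monomial: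
  assumes "k \<le> n - 1 - L"
  shows "mpoly_eval (tree_weights i t) (rhs_coeff n E Leak i j k)
    = ((-1) ^ (j - 1 + (i - 1) + L) * signof path_perm * of_nat ((n - 1 - L) choose k)) * t ^ (n - 1 - k)"
proof -
  have "det (minor_char_matrix (spec_matrix i t))
      = Polynomial.smult (signof path_perm * (- t) ^ L) ([:t, 1:] ^ (n - 1 - L))"
    unfolding det_minor_char_matrix_spec by (simp add: of_int_poly poly_const_pow mult_ac)
  then have "coeff (det (minor_char_matrix (spec_matrix i t))) k
      = signof path_perm * (- t) ^ L * (of_nat ((n - 1 - L) choose k) * t ^ (n - 1 - L - k))"
    using assms by (simp add: coeff_linear_poly_power)
  moreover have "t ^ L * t ^ (n - 1 - L - k) = t ^ (n - 1 - k)"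
    using assms dist_path_less by (simp flip: power_add)
  ultimately show ?thesis
    by (simp add: eval_rhs_coeff power_minus[of t] power_add mult_ac)
qed

lemma rhs_coeff_not_constant:
  assumes "k + L < n" and "k + 1 < n"
  shows "\<not> is_constant_mpoly (rhs_coeff n E Leak i j k)"
proof (rule not_constant_if_eval_monomial)
  show "mpoly_eval (tree_weights i t) (rhs_coeff n E Leak i j k)
      = ((-1) ^ (j - 1 + (i - 1) + L) * signof path_perm * of_nat ((n - 1 - L) choose k)) * t ^ (n - 1 - k)" for t
    using assms by (intro eval_rhs_coeff_monomial) simp
  show "(-1) ^ (j - 1 + (i - 1) + L) * signof path_perm * of_nat ((n - 1 - L) choose k) \<noteq> (0::real)"
    using assms by (simp add: sign_def)
qed (use assms in simp)

text \<open>Following a nonzero term of the Leibniz formula for \<open>minor_char_matrix A\<close> from column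
  \<open>i\<close> traces, backwards, a walk from \<open>j\<close> to \<open>i\<close>; so the term moves at least \<open>L + 1\<close> points.\<close>
context
  fixes p :: "nat \<Rightarrow> nat"
  assumes input_ne_output: "i \<noteq> j" and p: "p permutes {0..<n}"
    and nonzero_term: "\<And>r. r < n \<Longrightarrow> minor_char_matrix A $$ (r, p r) \<noteq> 0"
begin

lemma nonzero_term_in_range: "r < n \<Longrightarrow> p r < n"
  using permutes_in_image[OF p] by simp

lemma nonzero_term_input: "p (j - 1) = i - 1"
proof -
  have i: "i - 1 < n" using output_in_range by auto
  then have "i - 1 \<in> p ` {0..<n}" using permutes_image[OF p] by simp
  then obtain r where r: "r < n" "p r = i - 1" by auto
  then have "r = j - 1"
    using nonzero_term[OF r(1)] minor_char_matrix_index[OF comp_matrix_carrier r(1) i]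
    by (auto split: if_splits)
  with r show ?thesis by simp
qed

lemma nonzero_term_orbit_in_range: "(p ^^ s) (i - 1) < n"
proof (induction s)
  case 0
  show ?case using output_in_range by auto
next
  case (Suc s)
  then show ?case using nonzero_term_in_range by simp
qed

lemma nonzero_term_orbit_moved: "p ((p ^^ s) (i - 1)) \<noteq> (p ^^ s) (i - 1)"
proof (induction s)
  case 0
  show ?case
  proof
    assume "p ((p ^^ 0) (i - 1)) = (p ^^ 0) (i - 1)"
    then have "p (i - 1) = p (j - 1)" using nonzero_term_input by simp
    then have "i - 1 = j - 1" using injD[OF permutes_inj[OF p]] by simp
    moreover have "1 \<le> i" "1 \<le> j" using output_in_range input_in_range by auto
    ultimately show False using input_ne_output by arith
  qed
next
  case (Suc s)
  show ?case
  proof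
    assume "p ((p ^^ Suc s) (i - 1)) = (p ^^ Suc s) (i - 1)"
    then have "p (p ((p ^^ s) (i - 1))) = p ((p ^^ s) (i - 1))" by simp
    then have "p ((p ^^ s) (i - 1)) = (p ^^ s) (i - 1)" by (rule injD[OF permutes_inj[OF p]])
    with Suc.IH show False ..
  qed
qed

lemma nonzero_term_orbit_walk: "s \<le> L \<Longrightarrow> ((p ^^ s) (i - 1) + 1, i) \<in> E ^^ s"
proof (induction s)
  case 0
  then show ?case using output_in_range by simp
next
  case (Suc s)
  let ?x = "(p ^^ s) (i - 1)"
  have walk: "(?x + 1, i) \<in> E ^^ s" using Suc by simp
  have "?x \<noteq> j - 1"
  proof
    assume "?x = j - 1"
    then have "(j, i) \<in> E ^^ s" using walk input_in_range by simp
    then have "L \<le> s" by (rule dist_path_le)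
    with Suc.prems show False by simp
  qed
  have "p ?x \<noteq> i - 1"
  proof
    assume "p ?x = i - 1"
    then have "p ?x = p (j - 1)" using nonzero_term_input by simp
    then have "?x = j - 1" by (rule injD[OF permutes_inj[OF p]])
    with \<open>?x \<noteq> j - 1\<close> show False ..
  qed
  have x: "?x < n" and px: "p ?x < n"
    using nonzero_term_orbit_in_range nonzero_term_in_range by auto
  have "A $$ (?x, p ?x) \<noteq> 0"
    using nonzero_term[OF x] not_sym[OF nonzero_term_orbit_moved[of s]] \<open>p ?x \<noteq> i - 1\<close>
      minor_char_matrix_index[OF comp_matrix_carrier x px] by auto
  then have "(p ?x + 1, ?x + 1) \<in> E"
    by (rule edge_if_comp_matrix_nonzero[OF x px not_sym[OF nonzero_term_orbit_moved]])
  then show ?case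
    using relpow_Suc_I2[OF _ walk] by simp
qed

lemma card_moved_points_ge: "Suc L \<le> card {r \<in> {0..<n}. p r \<noteq> r}"
proof -
  have "inj_on (\<lambda>s. (p ^^ s) (i - 1)) {..L}"
  proof (rule inj_on_funpow_until_preimage[OF permutes_inj[OF p] nonzero_term_input])
    fix s assume "s < L"
    show "(p ^^ s) (i - 1) \<noteq> j - 1"
    proof
      assume "(p ^^ s) (i - 1) = j - 1"
      then have "(j, i) \<in> E ^^ s"
        using nonzero_term_orbit_walk[of s] \<open>s < L\<close> input_in_range by simp
      then have "L \<le> s" by (rule dist_path_le)
      with \<open>s < L\<close> show False by simp
    qed
  qed
  then have "Suc L = card ((\<lambda>s. (p ^^ s) (i - 1)) ` {..L})" by (simp add: card_image)
  also have "\<dots> \<le> card {r \<in> {0..<n}. p r \<noteq> r}"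
    by (rule card_mono) (use nonzero_term_orbit_in_range nonzero_term_orbit_moved in auto)
  finally show ?thesis .
qed

end

lemma degree_det_minor_char_matrix:
  assumes "i \<noteq> j"
  shows "degree (det (minor_char_matrix A)) \<le> n - 1 - L"
proof -
  let ?C = "minor_char_matrix A"
  have term_degree: "degree (signof p * (\<Prod>r = 0..<n. ?C $$ (r, p r))) \<le> n - 1 - L"
    if p: "p permutes {0..<n}" for p
  proof (cases "\<exists>r < n. ?C $$ (r, p r) = 0")
    case True
    then obtain r where "r < n" "?C $$ (r, p r) = 0" by blast
    then have "(\<Prod>r = 0..<n. ?C $$ (r, p r)) = 0" by (intro prod_zero) (auto intro!: bexI[of _ r])
    then show ?thesis by simp
  next
    case False
    then have nonzero: "\<And>r. r < n \<Longrightarrow> ?C $$ (r, p r) \<noteq> 0" by auto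
    let ?M = "{r \<in> {0..<n}. p r \<noteq> r}"
    have fixed: "{r \<in> {0..<n}. p r = r} = {0..<n} - ?M" by auto
    have "card ({0..<n} - ?M) = card {0..<n} - card ?M" by (rule card_Diff_subset) auto
    then have "card {r \<in> {0..<n}. p r = r} \<le> n - 1 - L"
      unfolding fixed using card_moved_points_ge[OF assms p nonzero] by simp
    moreover have "degree (\<Prod>r = 0..<n. ?C $$ (r, p r)) \<le> card {r \<in> {0..<n}. p r = r}"
      by (rule degree_prod_perm_le_card_fixed_points[OF _ p])
        (simp add: minor_char_matrix_def degree_replace_col_unit_char_poly_matrix[of _ n])
    moreover have "degree (signof p * q) \<le> degree q" for q :: "mpoly poly"
      using degree_mult_le[of "signof p" q] by simp
    ultimately show ?thesis by (meson order_trans)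
  qed
  show ?thesis
    unfolding det_def'[OF minor_char_matrix_carrier[OF comp_matrix_carrier]]
    by (rule degree_sum_le) (use term_degree finite_permutations in auto)
qed

lemma rhs_coeff_above_degree:
  assumes "i \<noteq> j" and "n - 1 - L < k"
  shows "rhs_coeff n E Leak i j k = 0"
  using coeff_eq_0[OF le_less_trans[OF degree_det_minor_char_matrix[OF assms(1)] assms(2)]]
  by (simp add: rhs_coeff_eq_minor_char_matrix)

lemma rhs_coeff_top_if_same:
  assumes "i = j"
  shows "rhs_coeff n E Leak i j (n - 1) = 1"
proof -
  have i: "i - 1 < n" using output_in_range by auto
  have "mat_delete (char_poly_matrix A) (j - 1) (i - 1) = char_poly_matrix (mat_delete A (i - 1) (i - 1))"
    using assms mat_delete_char_poly_matrix[OF comp_matrix_carrier i] by simp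
  then have "rhs_coeff n E Leak i j (n - 1) = coeff (char_poly (mat_delete A (i - 1) (i - 1))) (n - 1)"
    by (simp add: rhs_coeff_def char_poly_def)
  also have "\<dots> = 1"
    using degree_monic_char_poly[OF mat_delete_carrier[OF comp_matrix_carrier]] by simp
  finally show ?thesis .
qed

lemma rhs_coeff_not_constant_iff:
  assumes "k < n"
  shows "\<not> is_constant_mpoly (rhs_coeff n E Leak i j k) \<longleftrightarrow>
    (if i = j then k + 2 \<le> n else k + L + 1 \<le> n)"
proof (cases "i = j")
  case True
  then have "k + 2 \<le> n \<longleftrightarrow> k \<noteq> n - 1" using assms by auto
  then show ?thesis
    using rhs_coeff_not_constant[of k] rhs_coeff_top_if_same True by auto
next
  case False
  then have "L \<noteq> 0" using dist_path_eq_0_iff output_in_range input_in_range by auto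
  have "k + L + 1 \<le> n \<longleftrightarrow> \<not> n - 1 - L < k" using dist_path_less by arith
  then show ?thesis
    using rhs_coeff_not_constant[of k] rhs_coeff_above_degree[OF False, of k] False \<open>L \<noteq> 0\<close> by auto
qed

end

context compartmental_model
begin

lemma char_poly_spec_matrix:
  assumes \<rho>: "\<rho> \<in> {1..n}"
  shows "char_poly (spec_matrix \<rho> t) = [:if \<rho> \<in> Leak then t else 0, 1:] * [:t, 1:] ^ (n - 1)"
proof -
  interpret io: io_compartmental_model n E Leak \<rho> \<rho>
    by unfold_locales (use \<rho> in auto)
  let ?M = "char_poly_matrix (spec_matrix \<rho> t)"
  have c: "\<rho> - 1 < n" using \<rho> by auto
  have "char_poly (spec_matrix \<rho> t) = ?M $$ (\<rho> - 1, \<rho> - 1) * det (replace_col_unit ?M (\<rho> - 1) (\<rho> - 1))"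
    unfolding char_poly_def
    by (rule det_eq_diag_mult_det_replace_col_unit[of _ n]) (use \<rho> c in \<open>auto simp: char_poly_matrix_spec_index\<close>)
  also have "det (replace_col_unit ?M (\<rho> - 1) (\<rho> - 1)) = [:t, 1:] ^ (n - 1)"
    using io.det_minor_char_matrix_spec[of t] by (simp add: io.minor_char_matrix_def io.path_perm_def io.path_cycle_def)
  finally show ?thesis
    using \<rho> c by (simp add: char_poly_matrix_spec_index)
qed

lemma lhs_coeff_not_constant:
  assumes "k < n" and "Leak \<noteq> {} \<or> 1 \<le> k"
  shows "\<not> is_constant_mpoly (lhs_coeff n E Leak k)"
proof -
  obtain \<rho> where \<rho>: "\<rho> \<in> {1..n}" and leak: "\<rho> \<in> Leak \<longleftrightarrow> Leak \<noteq> {}"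
  proof (cases "Leak = {}")
    case True
    then show ?thesis using that[of 1] \<open>k < n\<close> by auto
  next
    case False
    then obtain \<rho> where "\<rho> \<in> Leak" by blast
    moreover have "\<rho> \<in> {1..n}" using \<open>\<rho> \<in> Leak\<close> leaks_in_range by blast
    ultimately show ?thesis using that False by blast
  qed
  have eval: "mpoly_eval (tree_weights \<rho> t) (lhs_coeff n E Leak k)
      = coeff ([:if \<rho> \<in> Leak then t else 0, 1:] * [:t, 1:] ^ (n - 1)) k" for t
    using eval_coeff_char_poly char_poly_spec_matrix[OF \<rho>] by (simp add: lhs_coeff_def char_poly_def)
  show ?thesis
  proof (cases "Leak = {}")
    case False
    have "[:t, 1:] * [:t, 1:] ^ (n - 1) = [:t, 1:] ^ n" for t :: real
      using \<open>k < n\<close> by (simp flip: power_Suc)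
    then show ?thesis
      using eval leak False \<open>k < n\<close>
      by (intro not_constant_if_eval_monomial[where K = "of_nat (n choose k)" and e = "n - k"])
        (simp_all add: coeff_linear_poly_power)
  next
    case True
    then obtain k' where k: "k = Suc k'" using assms(2) by (cases k) auto
    show ?thesis
      using eval leak True \<open>k < n\<close>
      by (intro not_constant_if_eval_monomial[where K = "of_nat ((n - 1) choose k')" and e = "n - k"])
        (simp_all add: k coeff_linear_poly_power)
  qed
qed

lemma lhs_coeff_not_constant_iff:
  assumes "k < n"
  shows "\<not> is_constant_mpoly (lhs_coeff n E Leak k) \<longleftrightarrow> Leak \<noteq> {} \<or> 1 \<le> k"
  using lhs_coeff_not_constant[OF assms] lhs_coeff_0_no_leak assms by (cases k) auto

end

theorem corollary3p2:
  fixes n i j :: nat and E :: "(nat \<times> nat) set" and Leak :: "nat set"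
  assumes "E \<subseteq> {1..n} \<times> {1..n}"
    and "\<forall>k. (k, k) \<notin> E"
    and "Leak \<subseteq> {1..n}"
    and "i \<in> {1..n}" and "j \<in> {1..n}"
    and "strongly_connected n E"
  shows "(\<forall>k<n. \<not> is_constant_mpoly (lhs_coeff n E Leak k) \<longleftrightarrow> (Leak \<noteq> {} \<or> 1 \<le> k))
       \<and> (\<forall>k<n. \<not> is_constant_mpoly (rhs_coeff n E Leak i j k) \<longleftrightarrow>
              (if i = j then k + 2 \<le> n else k + dist_path E j i + 1 \<le> n))"
proof -
  interpret io_compartmental_model n E Leak i j
    by unfold_locales (use assms in auto)
  show ?thesis
    using lhs_coeff_not_constant_iff rhs_coeff_not_constant_iff by blast
qed

end
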